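(* Let $K(\mathbf x)$ and $M(\mathbf x)$ be real symmetric positive definite $n\times n$ matrices depending in a $\mathcal C^2$ way on $\mathbf x=(x_1,\dots,x_\ell)\in\mathbb R^\ell$, fix $\mathbf x^{(0)}$, and write $K_0=K(\mathbf x^{(0)})$, $M_0=M(\mathbf x^{(0)})$. Let $U\in\mathbb R^{n\times m}$ satisfy $U^T M_0 U = I_m$, set $Z(\mathbf x):=U^TM(\mathbf x)U$, $U_{m,0}(\mathbf x):=UZ(\mathbf x)^{-1/2}$ and $$F_0(\mathbf x) := U_{m,0}(\mathbf x)^T M(\mathbf x)K(\mathbf x)^{-1}M(\mathbf x)U_{m,0}(\mathbf x).$$ Define $T_m := U^T M_0 K_0^{-1} M_0 U$, $$\hat Z(\mathbf x) := I_m + \sum_{j=1}^\ell (x_j-x_j^{(0)})\, U^T \frac{\partial M(\mathbf x^{(0)})}{\partial x_j} U,$$ $$G_j := \frac{\partial M(\mathbf x^{(0)})}{\partial x_j}K_0^{-1}M_0 - M_0K_0^{-1}\frac{\partial K(\mathbf x^{(0)})}{\partial x_j}K_0^{-1}M_0 + M_0K_0^{-1}\frac{\partial M(\mathbf x^{(0)})}{\partial x_j},$$ $\hat G_j(\mathbf x) := Z(\mathbf x)^{-1/2}U^TG_jUZ(\mathbf x)^{-1/2}$, and $$F_{m,0}(\mathbf x) := \hat Z(\mathbf x)^{-1/2}\, T_m\, \hat Z(\mathbf x)^{-1/2} + \sum_{j=1}^\ell (x_j-x_j^{(0)})\hat G_j(\mathbf x).$$ Then there exists a neighborhood $\mathcal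 N$ of $\mathbf x^{(0)}$ (on which $Z(\mathbf x)$ and $\hat Z(\mathbf x)$ are positive definite) such that $$F_0(\mathbf x) = F_{m,0}(\mathbf x) + O(\|\mathbf x-\mathbf x^{(0)}\|^2),\qquad \mathbf x\in\mathcal N.$$
   Context: $U$ is the $M_0$-orthogonal basis obtained by the inverse Lanczos process applied at $\mathbf x^{(0)}$ to the pencil $K-\lambda M$, and $T_m$ is the corresponding tridiagonal projected matrix. $F_0(\mathbf x)$ is the projection of $M(\mathbf x)K(\mathbf x)^{-1}M(\mathbf x)$ onto the fixed subspace spanned by $U$, using an $M(\mathbf x)$-orthonormal basis of it; $F_{m,0}$ is a cheap reduced model built only from small $m\times m$ matrices precomputed at $\mathbf x^{(0)}$. *)

theory Defs
  imports "HOL-Analysis.Analysis"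
begin

definition spd :: "real^'n^'n \<Rightarrow> bool" where
  "spd A \<longleftrightarrow> transpose A = A \<and> (\<forall>v. v \<noteq> 0 \<longrightarrow> v \<bullet> (A *v v) > 0)"

definition msqrt :: "real^'n^'n \<Rightarrow> real^'n^'n" where
  "msqrt A = (THE S. spd S \<and> S ** S = A)"

definition isqrt :: "real^'n^'n \<Rightarrow> real^'n^'n" where
  "isqrt A = matrix_inv (msqrt A)"

definition C2 :: "(real^'l \<Rightarrow> 'a::real_normed_vector) \<Rightarrow> bool" where
  "C2 f \<longleftrightarrow> (\<exists>D :: real^'l \<Rightarrow> ((real^'l) \<Rightarrow>\<^sub>L 'a). \<exists>D2 :: real^'l \<Rightarrow> ((real^'l) \<Rightarrow>\<^sub>L ((real^'l) \<Rightarrow>\<^sub>L 'a)).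
     (\<forall>x. (f has_derivative blinfun_apply (D x)) (at x)) \<and>
     (\<forall>x. (D has_derivative blinfun_apply (D2 x)) (at x)) \<and>
     continuous_on UNIV D2)"

definition pderiv_at :: "(real^'l \<Rightarrow> 'a::real_normed_vector) \<Rightarrow> 'l \<Rightarrow> real^'l \<Rightarrow> 'a" where
  "pderiv_at f j x = frechet_derivative f (at x) (axis j 1)"

end

(*
  Since U^T M(x0) U = I, the matrix Z(x) = U^T M(x) U equals I at x0 and Zhat(x) is exactly its
  first-order Taylor polynomial, so Z - Zhat = O(|x - x0|^2).  Near the identity, square roots
  exist (Banach fixed point) and the identity S (S - T) + (S - T) T = S^2 - T^2 makes the inverse
  square root Lipschitz; hence Z^(-1/2) - Zhat^(-1/2) = O(|x - x0|^2) with both factors bounded.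
  Independently, the product rule for first-order expansions together with the resolvent identity
  K0^-1 - K^-1 = K0^-1 (K - K0) K^-1 gives M K^-1 M = M0 K0^-1 M0 + sum_j (x_j - x0_j) G_j
  + O(|x - x0|^2).  Sandwiching this expansion between Z^(-1/2), and replacing Z^(-1/2) by
  Zhat^(-1/2) in the zeroth-order term only, yields F0 - Fm0 = O(|x - x0|^2).
*)
theory Submission
  imports Defs
begin

section \<open>Matrix norms and quadratic forms\<close>

lemma power2_norm_vec: "(norm (x::'b::real_inner^'a))\<^sup>2 = (\<Sum>i\<in>UNIV. (norm (x $ i))\<^sup>2)"
  by (simp add: power2_norm_eq_inner inner_vec_def)

lemma norm_matrix_vector_mult_le: "norm (A *v x) \<le> norm (A::real^'a^'b) * norm x"
proof -
  have "(norm (A *v x))\<^sup>2 = (\<Sum>i\<in>UNIV. (inner (A $ i) x)\<^sup>2)"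
    by (simp add: power2_norm_vec matrix_vector_mult_def inner_vec_def mult.commute)
  also have "\<dots> \<le> (\<Sum>i\<in>UNIV. (norm (A $ i) * norm x)\<^sup>2)"
    by (intro sum_mono) (metis Cauchy_Schwarz_ineq2 abs_ge_zero power2_abs power_mono)
  also have "\<dots> = (norm A * norm x)\<^sup>2"
    by (simp add: power2_norm_vec[of A] power_mult_distrib sum_distrib_right)
  finally show ?thesis
    by (meson mult_nonneg_nonneg norm_ge_zero power2_le_imp_le)
qed

lemma norm_transpose: "norm (transpose (A::real^'a^'b)) = norm A"
proof -
  have "inner (transpose A) (transpose A) = inner A A"
    by (simp add: inner_vec_def transpose_def) (rule sum.swap)
  then show ?thesis by (simp add: norm_eq_sqrt_inner)
qed

lemma matrix_mult_row: "(A ** B) $ i = A $ i v* (B::real^'c^'a)"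
  by (simp add: matrix_matrix_mult_def vector_matrix_mult_def vec_eq_iff)

text \<open>The norm of a matrix of type real^'a^'b is its Frobenius norm, which is submultiplicative.\<close>

lemma norm_matrix_mult_le: "norm (A ** B) \<le> norm (A::real^'a^'b) * norm (B::real^'c^'a)"
proof -
  have "(norm (A ** B))\<^sup>2 = (\<Sum>i\<in>UNIV. (norm (transpose B *v (A $ i)))\<^sup>2)"
    by (simp add: power2_norm_vec[of "A ** B"] matrix_mult_row)
  also have "\<dots> \<le> (\<Sum>i\<in>UNIV. (norm B * norm (A $ i))\<^sup>2)"
    by (intro sum_mono power_mono norm_ge_zero)
       (metis norm_matrix_vector_mult_le norm_transpose)
  also have "\<dots> = (norm A * norm B)\<^sup>2"
    by (simp add: power2_norm_vec[of A] power_mult_distrib sum_distrib_left mult.commute)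
  finally show ?thesis
    by (meson mult_nonneg_nonneg norm_ge_zero power2_le_imp_le)
qed

lemma bounded_bilinear_matrix_mult:
  "bounded_bilinear ((**) :: real^'a^'b \<Rightarrow> real^'c^'a \<Rightarrow> real^'c^'b)"
proof
  show "\<exists>K. \<forall>A B. norm (A ** B :: real^'c^'b) \<le> norm (A::real^'a^'b) * norm B * K"
    by (metis mult.right_neutral norm_matrix_mult_le)
qed (simp_all add: matrix_add_ldistrib scalar_matrix_assoc matrix_scalar_ac,
     simp add: matrix_matrix_mult_def vec_eq_iff algebra_simps sum.distrib)

interpretation matrix_mult: bounded_bilinear "(**) :: real^'a^'b \<Rightarrow> real^'c^'a \<Rightarrow> real^'c^'b"
  by (rule bounded_bilinear_matrix_mult)

lemma bounded_linear_transpose: "bounded_linear (transpose :: real^'a^'b \<Rightarrow> real^'b^'a)"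
  by (rule bounded_linear_intro[where K=1])
     (auto simp: transpose_def vec_eq_iff norm_transpose[unfolded transpose_def])

lemmas transpose_add = linear_add[OF bounded_linear.linear[OF bounded_linear_transpose]]
  and transpose_diff = linear_diff[OF bounded_linear.linear[OF bounded_linear_transpose]]
  and transpose_sum = linear_sum[OF bounded_linear.linear[OF bounded_linear_transpose]]

lemma matrix_inv_right: "invertible A \<Longrightarrow> A ** matrix_inv A = mat 1"
  and matrix_inv_left: "invertible A \<Longrightarrow> matrix_inv A ** A = mat 1"
  unfolding invertible_def matrix_inv_def by (metis (mono_tags, lifting) someI_ex)+

lemma abs_inner_matrix_vector_le: "\<bar>inner x (A *v x)\<bar> \<le> norm (A::real^'a^'a) * (norm x)\<^sup>2"
proof -
  have "\<bar>inner x (A *v x)\<bar> \<le> norm x * norm (A *v x)" by (rule Cauchy_Schwarz_ineq2)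
  also have "\<dots> \<le> norm x * (norm A * norm x)" by (simp add: mult_left_mono norm_matrix_vector_mult_le)
  finally show ?thesis by (simp add: power2_eq_square mult_ac)
qed

lemma invertible_if_pos_def:
  assumes "\<And>v. v \<noteq> 0 \<Longrightarrow> inner v ((S::real^'n^'n) *v v) > 0"
  shows "invertible S"
proof -
  have "\<forall>x. S *v x = 0 \<longrightarrow> x = 0" using assms by force
  then obtain B where "B ** S = mat 1" using matrix_left_invertible_ker by blast
  then show ?thesis unfolding invertible_def using matrix_left_right_inverse by blast
qed

lemma spd_invertible: "spd S \<Longrightarrow> invertible S"
  unfolding spd_def by (blast intro: invertible_if_pos_def)

lemma transpose_matrix_inv_sym:
  assumes "invertible (S::real^'n^'n)" "transpose S = S"
  shows "transpose (matrix_inv S) = matrix_inv S"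
proof -
  let ?X = "matrix_inv S"
  have "transpose ?X ** S = mat 1"
    using matrix_inv_right[OF assms(1)] matrix_transpose_mul[of S ?X] assms(2) by simp
  have "transpose ?X = transpose ?X ** (S ** ?X)" using matrix_inv_right[OF assms(1)] by simp
  also have "\<dots> = (transpose ?X ** S) ** ?X" by (rule matrix_mul_assoc)
  also have "\<dots> = ?X" using \<open>transpose ?X ** S = mat 1\<close> by simp
  finally show ?thesis .
qed

lemma spd_coercive:
  assumes "spd (S::real^'n^'n)"
  obtains c where "c > 0" "\<And>v. c * (norm v)\<^sup>2 \<le> inner v (S *v v)"
proof -
  have "\<exists>u\<in>sphere 0 1. \<forall>w\<in>sphere 0 1. inner u (S *v u) \<le> inner w (S *v w)"
    by (intro continuous_attains_inf continuous_intros) auto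
  then obtain u where u: "norm u = 1"
    and min: "\<And>w. norm w = 1 \<Longrightarrow> inner u (S *v u) \<le> inner w (S *v w)"
    by auto
  show thesis
  proof
    have "u \<noteq> 0" using u by auto
    then show "inner u (S *v u) > 0" using assms unfolding spd_def by blast
    fix v :: "real^'n"
    show "inner u (S *v u) * (norm v)\<^sup>2 \<le> inner v (S *v v)"
    proof (cases "v = 0")
      case False
      define w where "w = (1 / norm v) *\<^sub>R v"
      have "inner w (S *v w) = inner v (S *v v) / (norm v)\<^sup>2"
        by (simp add: w_def matrix_vector_mult_scaleR power2_eq_square)
      moreover have "norm w = 1" using False by (simp add: w_def)
      ultimately show ?thesis using min[of w] False by (simp add: pos_le_divide_eq)
    qed simp
  qed
qed

lemma inner_vector_matrix_mult_self: "inner v (v v* T) = inner v ((T::real^'n^'n) *v v)"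
  by (simp add: inner_commute[of v "v v* T"] dot_lmul_matrix)

lemma inner_transpose: "inner (transpose (X::real^'a^'b)) (transpose Y) = inner X Y"
  by (simp add: inner_vec_def transpose_def) (rule sum.swap)

lemma inner_matrix_mult_right_ge:
  assumes "\<And>v. c * (norm v)\<^sup>2 \<le> inner v ((T::real^'n^'n) *v v)"
  shows "c * (norm D)\<^sup>2 \<le> inner (D::real^'n^'m) (D ** T)"
proof -
  have "c * (norm D)\<^sup>2 = (\<Sum>i\<in>UNIV. c * (norm (D $ i))\<^sup>2)"
    by (simp add: power2_norm_vec[of D] sum_distrib_left)
  also have "\<dots> \<le> (\<Sum>i\<in>UNIV. inner (D $ i) (D $ i v* T))"
    by (intro sum_mono) (simp add: inner_vector_matrix_mult_self assms)
  also have "\<dots> = inner D (D ** T)"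
    by (simp add: inner_vec_def[of D] matrix_mult_row)
  finally show ?thesis .
qed

lemma inner_matrix_mult_left_ge:
  assumes "\<And>v. c * (norm v)\<^sup>2 \<le> inner v ((S::real^'n^'n) *v v)"
  shows "c * (norm D)\<^sup>2 \<le> inner (D::real^'m^'n) (S ** D)"
proof -
  have "c * (norm (transpose D))\<^sup>2 \<le> inner (transpose D) (transpose D ** transpose S)"
    by (rule inner_matrix_mult_right_ge)
       (simp add: assms inner_vector_matrix_mult_self)
  then show ?thesis by (simp add: norm_transpose inner_transpose flip: matrix_transpose_mul)
qed

section \<open>Square roots near the identity\<close>

text \<open>This lower bound for the squaring map gives both uniqueness and Lipschitz continuity of
  square roots.\<close>

lemma norm_matrix_mult_square_diff_ge:
  fixes S T :: "real^'n^'n"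
  assumes "\<And>v. c * (norm v)\<^sup>2 \<le> inner v (S *v v)" and "\<And>v. c * (norm v)\<^sup>2 \<le> inner v (T *v v)"
  shows "2 * c * norm (S - T) \<le> norm (S ** S - T ** T)"
proof -
  let ?D = "S - T"
  have "S ** S - T ** T = S ** ?D + ?D ** T"
    by (simp add: matrix_mult.diff_left matrix_mult.diff_right)
  then have "2 * c * (norm ?D)\<^sup>2 \<le> inner ?D (S ** S - T ** T)"
    using inner_matrix_mult_left_ge[OF assms(1), of ?D] inner_matrix_mult_right_ge[OF assms(2), of ?D]
    by (simp add: inner_add_right)
  also have "\<dots> \<le> norm ?D * norm (S ** S - T ** T)"
    by (rule Cauchy_Schwarz_ineq2[THEN order_trans[OF abs_ge_self]])
  finally show ?thesis
    by (cases "?D = 0") (auto simp: power2_eq_square mult_ac)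
qed

lemma spd_sqrt_unique:
  assumes "spd S" "spd T" "S ** S = T ** T"
  shows "S = T"
proof -
  obtain a b where "a > 0" "\<And>v. a * (norm v)\<^sup>2 \<le> inner v (S *v v)"
    and "b > 0" "\<And>v. b * (norm v)\<^sup>2 \<le> inner v (T *v v)"
    using spd_coercive assms(1,2) by metis
  then have "2 * min a b * norm (S - T) \<le> norm (S ** S - T ** T)"
    by (intro norm_matrix_mult_square_diff_ge)
       (meson min.cobounded1 min.cobounded2 mult_right_mono order_trans zero_le_power2)+
  then show ?thesis using assms(3) \<open>a > 0\<close> \<open>b > 0\<close>
    by (smt (verit) mult_pos_pos norm_le_zero_iff right_minus_eq)
qed

text \<open>Writing A = I + E, the matrix I + R is a square root of A iff R = (E - R ** R) / 2; this map
  is a contraction with constant 1/2 on the symmetric matrices of norm at most 1/2.\<close>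

lemma sqrt_near_identity_exists:
  fixes A :: "real^'n^'n"
  assumes sA: "transpose A = A" and nA: "norm (A - mat 1) \<le> 1/4"
  obtains R where "transpose R = R" "norm R \<le> 1/2" "(mat 1 + R) ** (mat 1 + R) = A"
proof -
  let ?E = "A - mat 1"
  define B where "B = {R::real^'n^'n. transpose R = R} \<inter> cball 0 (1/2)"
  define f where "f R = (1/2) *\<^sub>R (?E - R ** R)" for R :: "real^'n^'n"
  have complete: "complete B"
    unfolding B_def complete_eq_closed
    by (intro closed_Int closed_Collect_eq closed_cball continuous_on_id
        linear_continuous_on bounded_linear_transpose)
  have nonempty: "B \<noteq> {}" unfolding B_def
    by (rule ex_in_conv[THEN iffD1], rule exI[of _ 0]) (simp add: transpose_def vec_eq_iff)
  have maps_to: "f ` B \<subseteq> B"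
  proof clarify
    fix R assume "R \<in> B"
    then have sR: "transpose R = R" and nR: "norm R \<le> 1/2" by (auto simp: B_def)
    have "norm (R ** R) \<le> 1/4"
      using norm_matrix_mult_le[of R R] mult_mono[OF nR nR] by simp
    then have "norm (?E - R ** R) \<le> 1/2" using nA norm_triangle_ineq4[of ?E "R ** R"] by linarith
    moreover have "transpose (?E - R ** R) = ?E - R ** R"
      by (simp add: transpose_diff sA sR matrix_transpose_mul)
    ultimately show "f R \<in> B" by (simp add: B_def f_def transpose_scalar)
  qed
  have contraction: "dist (f R) (f Q) \<le> 1/2 * dist R Q" if "R \<in> B" "Q \<in> B" for R Q
  proof -
    have "norm R \<le> 1/2" "norm Q \<le> 1/2" using that by (auto simp: B_def)
    then have "norm (Q ** (Q - R) + (Q - R) ** R) \<le> 1/2 * norm (Q - R) + norm (Q - R) * (1/2)"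
      by (intro order_trans[OF norm_triangle_ineq] add_mono order_trans[OF norm_matrix_mult_le]
          mult_right_mono mult_left_mono) auto
    moreover have "f R - f Q = (1/2) *\<^sub>R (Q ** (Q - R) + (Q - R) ** R)"
      by (simp add: f_def matrix_mult.diff_left matrix_mult.diff_right algebra_simps)
    ultimately show ?thesis by (simp add: dist_norm norm_minus_commute)
  qed
  have "\<exists>!R\<in>B. f R = R" by (rule Banach_fix[OF complete nonempty _ _ maps_to contraction]) auto
  then obtain R where R: "R \<in> B" "f R = R" by blast
  have "(mat 1 + R) ** (mat 1 + R) = mat 1 + 2 *\<^sub>R f R + R ** R"
    by (simp add: R(2) matrix_mult.add_left matrix_mult.add_right scaleR_2 algebra_simps)
  also have "\<dots> = A" by (simp add: f_def)
  finally show thesis using R(1) by (intro that[of R]) (auto simp: B_def)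
qed

lemma msqrt_near_identity:
  fixes A :: "real^'n^'n"
  assumes "transpose A = A" "norm (A - mat 1) \<le> 1/4"
  shows "msqrt A ** msqrt A = A" "transpose (msqrt A) = msqrt A"
    "\<And>v. 1/2 * (norm v)\<^sup>2 \<le> inner v (msqrt A *v v)"
proof -
  obtain R where R: "transpose R = R" "norm R \<le> 1/2" "(mat 1 + R) ** (mat 1 + R) = A"
    using sqrt_near_identity_exists[OF assms] by blast
  let ?S = "mat 1 + R"
  have coercive: "1/2 * (norm v)\<^sup>2 \<le> inner v (?S *v v)" for v
  proof -
    have "\<bar>inner v (R *v v)\<bar> \<le> 1/2 * (norm v)\<^sup>2"
      using abs_inner_matrix_vector_le[of v R] mult_right_mono[OF R(2), of "(norm v)\<^sup>2"] by simp
    moreover have "inner v (?S *v v) = (norm v)\<^sup>2 + inner v (R *v v)"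
      by (simp add: matrix_vector_mult_add_rdistrib inner_add_right power2_norm_eq_inner)
    ultimately show ?thesis by linarith
  qed
  have "spd ?S" unfolding spd_def
  proof (intro conjI allI impI)
    show "transpose ?S = ?S" using R(1) by (simp add: transpose_add)
    show "inner v (?S *v v) > 0" if "v \<noteq> 0" for v
      using that by (intro order_less_le_trans[OF _ coercive]) simp
  qed
  then have "msqrt A = ?S"
    unfolding msqrt_def using R(3) spd_sqrt_unique by (intro the_equality) auto
  then show "msqrt A ** msqrt A = A" "transpose (msqrt A) = msqrt A"
    "\<And>v. 1/2 * (norm v)\<^sup>2 \<le> inner v (msqrt A *v v)"
    using R(3) \<open>spd ?S\<close> coercive unfolding spd_def by simp_all
qed

lemma norm_matrix_inv_le:
  assumes "c > 0" and coercive: "\<And>v. c * (norm v)\<^sup>2 \<le> inner v ((S::real^'n^'n) *v v)"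
  shows "norm (matrix_inv S) \<le> real CARD('n) / c"
proof -
  have "invertible S"
    using \<open>c > 0\<close> by (intro invertible_if_pos_def order_less_le_trans[OF _ coercive]) simp
  let ?X = "matrix_inv S"
  have column: "norm (?X *v w) \<le> norm w / c" for w
  proof -
    have "S *v (?X *v w) = w"
      using matrix_inv_right[OF \<open>invertible S\<close>] by (simp add: matrix_vector_mul_assoc)
    then have "c * (norm (?X *v w))\<^sup>2 \<le> norm (?X *v w) * norm w"
      using coercive[of "?X *v w"] Cauchy_Schwarz_ineq2[of "?X *v w" w] by (simp add: inner_commute)
    then show ?thesis using \<open>c > 0\<close>
      by (cases "?X *v w = 0") (auto simp: power2_eq_square pos_le_divide_eq mult_ac)
  qed
  have "norm ?X = norm (transpose ?X)" by (simp add: norm_transpose)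
  also have "\<dots> \<le> (\<Sum>j\<in>UNIV. norm (transpose ?X $ j))"
    unfolding norm_vec_def by (rule L2_set_le_sum) auto
  also have "\<dots> = (\<Sum>j\<in>UNIV. norm (?X *v axis j 1))"
    by (simp add: transpose_def matrix_vector_mult_def axis_def if_distrib[of "(*) _"] cong: if_cong)
  also have "\<dots> \<le> (\<Sum>j\<in>(UNIV::'n set). 1 / c)"
    using column by (intro sum_mono) (simp add: column[of "axis _ 1", simplified])
  finally show ?thesis by simp
qed

lemma isqrt_near_identity:
  fixes A :: "real^'n^'n"
  assumes "transpose A = A" "norm (A - mat 1) \<le> 1/4"
  shows "isqrt A ** msqrt A = mat 1" "msqrt A ** isqrt A = mat 1"
    "transpose (isqrt A) = isqrt A" "norm (isqrt A) \<le> 2 * real CARD('n)"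
proof -
  note sqrt = msqrt_near_identity[OF assms]
  have "invertible (msqrt A)"
    by (intro invertible_if_pos_def order_less_le_trans[OF _ sqrt(3)]) simp
  then show "isqrt A ** msqrt A = mat 1" "msqrt A ** isqrt A = mat 1"
    "transpose (isqrt A) = isqrt A"
    unfolding isqrt_def using sqrt(2)
    by (simp_all add: matrix_inv_left matrix_inv_right transpose_matrix_inv_sym)
  show "norm (isqrt A) \<le> 2 * real CARD('n)"
    unfolding isqrt_def using norm_matrix_inv_le[OF _ sqrt(3)] by simp
qed

lemma isqrt_lipschitz_near_identity:
  fixes A B :: "real^'n^'n"
  assumes "transpose A = A" "norm (A - mat 1) \<le> 1/4"
    and "transpose B = B" "norm (B - mat 1) \<le> 1/4"
  shows "norm (isqrt A - isqrt B) \<le> (2 * real CARD('n))\<^sup>2 * norm (A - B)"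
proof -
  note sA = msqrt_near_identity[OF assms(1,2)] and iA = isqrt_near_identity[OF assms(1,2)]
  note sB = msqrt_near_identity[OF assms(3,4)] and iB = isqrt_near_identity[OF assms(3,4)]
  have "isqrt A ** (msqrt B - msqrt A) ** isqrt B
      = isqrt A ** (msqrt B ** isqrt B) - (isqrt A ** msqrt A) ** isqrt B"
    by (simp add: matrix_mult.diff_left matrix_mult.diff_right matrix_mul_assoc)
  then have "isqrt A - isqrt B = isqrt A ** (msqrt B - msqrt A) ** isqrt B"
    by (simp add: iA(1) iB(2))
  also have "norm \<dots> \<le> norm (isqrt A) * norm (msqrt B - msqrt A) * norm (isqrt B)"
    by (meson norm_matrix_mult_le order_trans mult_right_mono norm_ge_zero)
  also have "\<dots> \<le> (2 * real CARD('n)) * norm (A - B) * (2 * real CARD('n))"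
  proof (intro mult_mono iA(4) iB(4))
    show "norm (msqrt B - msqrt A) \<le> norm (A - B)"
      using norm_matrix_mult_square_diff_ge[OF sA(3) sB(3)] sA(1) sB(1)
      by (simp add: norm_minus_commute)
  qed auto
  finally show ?thesis by (simp add: power2_eq_square mult_ac)
qed

lemma spd_near_identity:
  fixes A :: "real^'n^'n"
  assumes "transpose A = A" "norm (A - mat 1) \<le> 1/4"
  shows "spd A"
  unfolding spd_def
proof (intro conjI allI impI)
  fix v :: "real^'n" assume "v \<noteq> 0"
  have "\<bar>inner v ((A - mat 1) *v v)\<bar> \<le> 1/4 * (norm v)\<^sup>2"
    using abs_inner_matrix_vector_le[of v "A - mat 1"] mult_right_mono[OF assms(2), of "(norm v)\<^sup>2"]
    by simp
  moreover have "inner v (A *v v) = (norm v)\<^sup>2 + inner v ((A - mat 1) *v v)"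
    by (simp add: matrix_vector_mult_diff_rdistrib inner_diff_right power2_norm_eq_inner)
  moreover have "(norm v)\<^sup>2 > 0" using \<open>v \<noteq> 0\<close> by simp
  ultimately show "inner v (A *v v) > 0" by linarith
qed (fact assms(1))

section \<open>Local big-O estimates\<close>

definition bigo_at :: "'a::real_normed_vector \<Rightarrow> nat \<Rightarrow> ('a \<Rightarrow> 'b::real_normed_vector) \<Rightarrow> bool" where
  "bigo_at x0 k f \<longleftrightarrow> (\<exists>C\<ge>0. \<forall>\<^sub>F x in nhds x0. norm (f x) \<le> C * norm (x - x0) ^ k)"

lemma bigo_atI:
  assumes "\<forall>\<^sub>F x in nhds x0. norm (f x) \<le> C * norm (x - x0) ^ k"
  shows "bigo_at x0 k f"
proof -
  have le: "C * norm (x - x0) ^ k \<le> max C 0 * norm (x - x0) ^ k" for x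
    by (intro mult_right_mono) simp_all
  have "\<forall>\<^sub>F x in nhds x0. norm (f x) \<le> max C 0 * norm (x - x0) ^ k"
    using assms by (rule eventually_mono) (erule order_trans, rule le)
  then show ?thesis unfolding bigo_at_def by (intro exI[of _ "max C 0"]) simp
qed

lemma bigo_atE:
  assumes "bigo_at x0 k f"
  obtains C where "C \<ge> 0" "\<forall>\<^sub>F x in nhds x0. norm (f x) \<le> C * norm (x - x0) ^ k"
  using assms unfolding bigo_at_def by blast

lemma bigo_at_const: "bigo_at x0 0 (\<lambda>x. c)"
  by (rule bigo_atI[where C="norm c"]) simp

lemma bigo_at_dominated:
  assumes "bigo_at x0 k g" "\<forall>\<^sub>F x in nhds x0. norm (f x) \<le> K * norm (g x)"
  shows "bigo_at x0 k f"
proof -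
  obtain C where "C \<ge> 0" and g: "\<forall>\<^sub>F x in nhds x0. norm (g x) \<le> C * norm (x - x0) ^ k"
    using assms(1) by (rule bigo_atE)
  from assms(2) g have "\<forall>\<^sub>F x in nhds x0. norm (f x) \<le> (\<bar>K\<bar> * C) * norm (x - x0) ^ k"
  proof eventually_elim
    case (elim x)
    have "norm (f x) \<le> \<bar>K\<bar> * norm (g x)"
      using elim(1) by (meson abs_ge_self mult_right_mono norm_ge_zero order_trans)
    also have "\<dots> \<le> \<bar>K\<bar> * (C * norm (x - x0) ^ k)"
      using elim(2) by (rule mult_left_mono) simp
    finally show ?case by (simp add: mult.assoc)
  qed
  then show ?thesis by (rule bigo_atI)
qed

lemma bigo_at_cong:
  assumes "bigo_at x0 k f" "\<forall>\<^sub>F x in nhds x0. f x = g x"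
  shows "bigo_at x0 k g"
  using assms(2) by (intro bigo_at_dominated[OF assms(1), where K=1]) (auto elim: eventually_mono)

lemma bigo_at_add:
  assumes "bigo_at x0 k f" "bigo_at x0 k g"
  shows "bigo_at x0 k (\<lambda>x. f x + g x)"
proof -
  obtain C where f: "\<forall>\<^sub>F x in nhds x0. norm (f x) \<le> C * norm (x - x0) ^ k"
    using assms(1) by (rule bigo_atE)
  obtain D where g: "\<forall>\<^sub>F x in nhds x0. norm (g x) \<le> D * norm (x - x0) ^ k"
    using assms(2) by (rule bigo_atE)
  from f g have "\<forall>\<^sub>F x in nhds x0. norm (f x + g x) \<le> (C + D) * norm (x - x0) ^ k"
    by eventually_elim (rule order_trans[OF norm_triangle_ineq], simp add: distrib_right add_mono)
  then show ?thesis by (rule bigo_atI)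
qed

lemma bigo_at_uminus: "bigo_at x0 k f \<Longrightarrow> bigo_at x0 k (\<lambda>x. - f x)"
  unfolding bigo_at_def by simp

lemma bigo_at_diff: "bigo_at x0 k f \<Longrightarrow> bigo_at x0 k g \<Longrightarrow> bigo_at x0 k (\<lambda>x. f x - g x)"
  using bigo_at_add[of x0 k f "\<lambda>x. - g x"] bigo_at_uminus[of x0 k g] by simp

lemma eventually_nhds_norm_less: "d > 0 \<Longrightarrow> \<forall>\<^sub>F x in nhds x0. norm (x - x0) < d"
  unfolding eventually_nhds_metric dist_norm by blast

lemma bigo_at_mono:
  assumes "bigo_at x0 k f" "j \<le> k"
  shows "bigo_at x0 j f"
proof -
  obtain C where "C \<ge> 0" and f: "\<forall>\<^sub>F x in nhds x0. norm (f x) \<le> C * norm (x - x0) ^ k"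
    using assms(1) by (rule bigo_atE)
  from f eventually_nhds_norm_less[OF zero_less_one]
  have "\<forall>\<^sub>F x in nhds x0. norm (f x) \<le> C * norm (x - x0) ^ j"
  proof eventually_elim
    case (elim x)
    have "norm (x - x0) ^ k \<le> norm (x - x0) ^ j"
      using elim(2) assms(2) by (intro power_decreasing) simp_all
    then show ?case using elim(1) \<open>C \<ge> 0\<close> by (meson mult_left_mono order_trans)
  qed
  then show ?thesis by (rule bigo_atI)
qed

lemma bigo_at_imp_eventually_small:
  assumes "bigo_at x0 k f" "k > 0" "e > 0"
  shows "\<forall>\<^sub>F x in nhds x0. norm (f x) \<le> e"
proof -
  have "bigo_at x0 1 f" using assms(1) by (rule bigo_at_mono) (use assms(2) in simp)
  then obtain C where "C \<ge> 0" and f: "\<forall>\<^sub>F x in nhds x0. norm (f x) \<le> C * norm (x - x0) ^ 1"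
    by (rule bigo_atE)
  have "e / (C + 1) > 0" using \<open>C \<ge> 0\<close> \<open>e > 0\<close> by simp
  from f eventually_nhds_norm_less[OF this] show ?thesis
  proof eventually_elim
    case (elim x)
    have "norm (f x) \<le> (C + 1) * norm (x - x0)"
      using elim(1) by (simp add: distrib_right add_increasing2)
    also have "\<dots> \<le> (C + 1) * (e / (C + 1))"
      using elim(2) \<open>C \<ge> 0\<close> by (intro mult_left_mono) auto
    also have "\<dots> = e"
      using \<open>C \<ge> 0\<close> by (simp only: times_divide_eq_right, intro nonzero_mult_div_cancel_left) linarith
    finally show ?case .
  qed
qed

lemma bounded_linear_bigo_at:
  assumes "bounded_linear L"
  shows "bigo_at x0 1 (\<lambda>x. L (x - x0))"
proof -
  obtain K where "\<And>x. norm (L x) \<le> norm x * K"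
    using bounded_linear.nonneg_bounded[OF assms] by blast
  then show ?thesis by (intro bigo_atI[where C=K] always_eventually) (simp add: mult.commute)
qed

lemma (in bounded_bilinear) bigo_at:
  assumes "bigo_at x0 j f" "bigo_at x0 k g" "j + k = n"
  shows "bigo_at x0 n (\<lambda>x. prod (f x) (g x))"
proof -
  obtain K where K: "\<And>a b. norm (prod a b) \<le> norm a * norm b * K" "K \<ge> 0"
    using nonneg_bounded by blast
  obtain C where "C \<ge> 0" and f: "\<forall>\<^sub>F x in nhds x0. norm (f x) \<le> C * norm (x - x0) ^ j"
    using assms(1) by (rule bigo_atE)
  obtain D where g: "\<forall>\<^sub>F x in nhds x0. norm (g x) \<le> D * norm (x - x0) ^ k"
    using assms(2) by (rule bigo_atE)
  from f g have "\<forall>\<^sub>F x in nhds x0. norm (prod (f x) (g x)) \<le> (C * D * K) * norm (x - x0) ^ n"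
  proof eventually_elim
    case (elim x)
    have "norm (f x) * norm (g x) \<le> (C * norm (x - x0) ^ j) * (D * norm (x - x0) ^ k)"
      using elim \<open>C \<ge> 0\<close> by (intro mult_mono) simp_all
    then have "norm (f x) * norm (g x) * K \<le> (C * norm (x - x0) ^ j) * (D * norm (x - x0) ^ k) * K"
      using K(2) by (rule mult_right_mono)
    then show ?case
      using K(1)[of "f x" "g x"] by (simp add: power_add mult_ac flip: assms(3))
  qed
  then show ?thesis by (rule bigo_atI)
qed

lemma has_derivative_bigo_at:
  assumes "(f has_derivative f') (at x0)"
  shows "bigo_at x0 1 (\<lambda>x. f x - f x0)"
proof -
  obtain d where "d > 0"
    and d: "\<And>y. norm (y - x0) < d \<Longrightarrow> norm (f y - f x0 - f' (y - x0)) \<le> 1 * norm (y - x0)"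
    using assms unfolding has_derivative_at_alt by (meson zero_less_one)
  have "\<forall>\<^sub>F y in nhds x0. norm (f y - f x0 - f' (y - x0)) \<le> 1 * norm (y - x0)"
    using eventually_nhds_norm_less[OF \<open>d > 0\<close>, of x0] by (rule eventually_mono) (rule d)
  then have "bigo_at x0 1 (\<lambda>x. f x - f x0 - f' (x - x0))"
    using bigo_atI[where C=1 and k=1] by simp
  moreover have "bigo_at x0 1 (\<lambda>x. f' (x - x0))"
    by (rule bounded_linear_bigo_at[OF has_derivative_bounded_linear[OF assms]])
  ultimately have "bigo_at x0 1 (\<lambda>x. (f x - f x0 - f' (x - x0)) + f' (x - x0))"
    by (rule bigo_at_add)
  then show ?thesis by simp
qed

lemma bigo_at_nhds_bound:
  assumes "bigo_at x0 k f" "\<forall>\<^sub>F x in nhds x0. P x"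
  shows "\<exists>N C. open N \<and> x0 \<in> N \<and> (\<forall>x\<in>N. P x) \<and> (\<forall>x\<in>N. norm (f x) \<le> C * norm (x - x0) ^ k)"
proof -
  obtain C where "\<forall>\<^sub>F x in nhds x0. norm (f x) \<le> C * norm (x - x0) ^ k"
    using assms(1) by (rule bigo_atE)
  with assms(2) have "\<forall>\<^sub>F x in nhds x0. P x \<and> norm (f x) \<le> C * norm (x - x0) ^ k"
    by (rule eventually_conj)
  then show ?thesis unfolding eventually_nhds by blast
qed

section \<open>Taylor expansion of C2 functions\<close>

lemma taylor_second_order_bigo_at:
  fixes f :: "'a::real_normed_vector \<Rightarrow> 'b::real_normed_vector"
  assumes f: "\<And>x. (f has_derivative blinfun_apply (D x)) (at x)"
    and D: "(D has_derivative D') (at x0)"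
  shows "bigo_at x0 2 (\<lambda>x. f x - f x0 - D x0 (x - x0))"
proof -
  obtain L where "L \<ge> 0" and "\<forall>\<^sub>F y in nhds x0. norm (D y - D x0) \<le> L * norm (y - x0) ^ 1"
    using has_derivative_bigo_at[OF D] by (rule bigo_atE)
  then obtain d where "d > 0"
    and Dlip: "\<And>y. norm (y - x0) < d \<Longrightarrow> norm (D y - D x0) \<le> L * norm (y - x0)"
    unfolding eventually_nhds_metric dist_norm power_one_right by blast
  define g where "g y = f y - D x0 (y - x0)" for y
  have bound: "norm (g x - g x0) \<le> L * norm (x - x0) ^ 2" if "norm (x - x0) < d" for x
  proof -
    let ?S = "cball x0 (norm (x - x0))"
    have "norm (g x - g x0) \<le> (L * norm (x - x0)) * norm (x - x0)"
    proof (rule differentiable_bound[where S="?S" and f'="\<lambda>y. blinfun_apply (D y - D x0)"])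
      show "convex ?S" "x \<in> ?S" "x0 \<in> ?S" by (auto simp: dist_norm norm_minus_commute)
      fix y assume y: "y \<in> ?S"
      have "((\<lambda>y. y - x0) has_derivative (\<lambda>h. h)) (at y)"
        using has_derivative_diff[OF has_derivative_ident has_derivative_const] by simp
      then have "((\<lambda>y. D x0 (y - x0)) has_derivative blinfun_apply (D x0)) (at y)"
        by (rule bounded_linear.has_derivative[OF blinfun.bounded_linear_right])
      then have "(g has_derivative blinfun_apply (D y - D x0)) (at y)"
        unfolding g_def blinfun.diff_left by (rule has_derivative_diff[OF f])
      then show "(g has_derivative blinfun_apply (D y - D x0)) (at y within ?S)"
        by (rule has_derivative_at_withinI)
      have y_near: "norm (y - x0) \<le> norm (x - x0)" using y by (simp add: dist_norm norm_minus_commute)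
      have "onorm (blinfun_apply (D y - D x0)) = norm (D y - D x0)" by (simp add: norm_blinfun.rep_eq)
      also have "\<dots> \<le> L * norm (y - x0)" using y_near that by (intro Dlip) simp
      also have "\<dots> \<le> L * norm (x - x0)" using y_near \<open>L \<ge> 0\<close> by (rule mult_left_mono)
      finally show "onorm (blinfun_apply (D y - D x0)) \<le> L * norm (x - x0)" .
    qed
    then show ?thesis by (simp add: power2_eq_square mult.assoc)
  qed
  have "\<forall>\<^sub>F x in nhds x0. norm (f x - f x0 - D x0 (x - x0)) \<le> L * norm (x - x0) ^ 2"
    using eventually_nhds_norm_less[OF \<open>d > 0\<close>, of x0]
    by (rule eventually_mono) (use bound in \<open>simp add: g_def algebra_simps\<close>)
  then show ?thesis by (rule bigo_atI)
qed

lemma C2_taylor_bigo_at: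
  assumes "C2 f"
  shows "bigo_at x0 2 (\<lambda>x. f x - f x0 - frechet_derivative f (at x0) (x - x0))"
proof -
  obtain D D2 where f: "\<And>x. (f has_derivative blinfun_apply (D x)) (at x)"
    and D: "\<And>x. (D has_derivative blinfun_apply (D2 x)) (at x)"
    using assms unfolding C2_def by blast
  have "frechet_derivative f (at x0) = blinfun_apply (D x0)"
    using f by (rule frechet_derivative_at[symmetric])
  then show ?thesis using taylor_second_order_bigo_at[OF f D] by simp
qed

lemma C2_differentiable: "C2 f \<Longrightarrow> f differentiable (at x)"
  unfolding C2_def differentiable_def by blast

lemma C2_bigo_at: "C2 f \<Longrightarrow> bigo_at x0 1 (\<lambda>x. f x - f x0)"
  by (rule has_derivative_bigo_at, rule iffD1[OF frechet_derivative_works], rule C2_differentiable)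

lemma linear_cart_basis_expansion:
  assumes "linear L"
  shows "L h = (\<Sum>j\<in>UNIV. h $ j *\<^sub>R L (axis j 1))"
proof -
  have "L h = L (\<Sum>j\<in>UNIV. h $ j *\<^sub>R axis j 1)"
    using basis_expansion[of h] by (simp add: scalar_mult_eq_scaleR)
  also have "\<dots> = (\<Sum>j\<in>UNIV. h $ j *\<^sub>R L (axis j 1))"
    by (simp add: linear_sum[OF assms] linear_scale[OF assms])
  finally show ?thesis .
qed

lemma frechet_derivative_pderiv_expansion:
  assumes "f differentiable (at x0)"
  shows "frechet_derivative f (at x0) h = (\<Sum>j\<in>UNIV. h $ j *\<^sub>R pderiv_at f j x0)"
  unfolding pderiv_at_def
  by (rule linear_cart_basis_expansion[OF has_derivative_linear])
     (rule iffD1[OF frechet_derivative_works assms])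

lemma pderiv_at_transpose_sym:
  fixes f :: "real^'l \<Rightarrow> real^'n^'n"
  assumes sym: "\<And>x. transpose (f x) = f x" and "f differentiable (at x0)"
  shows "transpose (pderiv_at f j x0) = pderiv_at f j x0"
proof -
  let ?f' = "frechet_derivative f (at x0)"
  have f': "(f has_derivative ?f') (at x0)" using assms(2) by (simp add: frechet_derivative_works)
  have "((\<lambda>x. transpose (f x)) has_derivative (\<lambda>h. transpose (?f' h))) (at x0)"
    by (rule bounded_linear.has_derivative[OF bounded_linear_transpose f'])
  then have "(f has_derivative (\<lambda>h. transpose (?f' h))) (at x0)"
    by (simp only: sym)
  then have "(\<lambda>h. transpose (?f' h)) = ?f'"
    using f' by (rule has_derivative_unique)
  then show ?thesis unfolding pderiv_at_def by (rule fun_cong)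
qed

section \<open>First-order expansions\<close>

definition first_order_expansion ::
    "'a::real_normed_vector \<Rightarrow> ('a \<Rightarrow> 'b::real_normed_vector) \<Rightarrow> 'b \<Rightarrow> ('a \<Rightarrow> 'b) \<Rightarrow> bool" where
  "first_order_expansion x0 F F0 dF \<longleftrightarrow>
     bigo_at x0 1 (\<lambda>x. F x - F0) \<and> bigo_at x0 2 (\<lambda>x. F x - F0 - dF x)"

lemma first_order_expansion_const: "first_order_expansion x0 (\<lambda>x. c) c (\<lambda>x. 0)"
  unfolding first_order_expansion_def by (auto intro: bigo_atI[where C=0])

lemma first_order_expansion_bigo_at_derivative:
  assumes "first_order_expansion x0 F F0 dF"
  shows "bigo_at x0 1 dF"
proof -
  have F1: "bigo_at x0 1 (\<lambda>x. F x - F0)" and F2: "bigo_at x0 2 (\<lambda>x. F x - F0 - dF x)"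
    using assms unfolding first_order_expansion_def by blast+
  have "bigo_at x0 1 (\<lambda>x. F x - F0 - dF x)" using F2 by (rule bigo_at_mono) simp
  with F1 have "bigo_at x0 1 (\<lambda>x. (F x - F0) - (F x - F0 - dF x))" by (rule bigo_at_diff)
  then show ?thesis by simp
qed

lemma C2_first_order_expansion:
  "C2 f \<Longrightarrow> first_order_expansion x0 f (f x0) (\<lambda>x. frechet_derivative f (at x0) (x - x0))"
  unfolding first_order_expansion_def by (intro conjI C2_bigo_at C2_taylor_bigo_at)

lemma (in bounded_bilinear) first_order_expansion:
  assumes A: "first_order_expansion x0 A A0 dA" and B: "first_order_expansion x0 B B0 dB"
  shows "first_order_expansion x0 (\<lambda>x. prod (A x) (B x)) (prod A0 B0)
           (\<lambda>x. prod (dA x) B0 + prod A0 (dB x))"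
proof -
  have A1: "bigo_at x0 1 (\<lambda>x. A x - A0)" and A2: "bigo_at x0 2 (\<lambda>x. A x - A0 - dA x)"
    and B1: "bigo_at x0 1 (\<lambda>x. B x - B0)" and B2: "bigo_at x0 2 (\<lambda>x. B x - B0 - dB x)"
    using A B unfolding first_order_expansion_def by blast+
  have cross: "bigo_at x0 2 (\<lambda>x. prod (A x - A0) (B x - B0))"
    by (rule bigo_at[OF A1 B1]) simp
  have left: "bigo_at x0 k (\<lambda>x. prod (D x) B0)" if "bigo_at x0 k D" for k D
    by (rule bigo_at[OF that bigo_at_const]) simp
  have right: "bigo_at x0 k (\<lambda>x. prod A0 (D x))" if "bigo_at x0 k D" for k D
    by (rule bigo_at[OF bigo_at_const that]) simp
  have first: "prod (A x) (B x) - prod A0 B0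
      = prod (A x - A0) B0 + prod A0 (B x - B0) + prod (A x - A0) (B x - B0)" for x
    by (simp add: diff_left diff_right)
  have second: "prod (A x) (B x) - prod A0 B0 - (prod (dA x) B0 + prod A0 (dB x))
      = prod (A x - A0 - dA x) B0 + prod A0 (B x - B0 - dB x) + prod (A x - A0) (B x - B0)" for x
    by (simp add: diff_left diff_right)
  have "bigo_at x0 1 (\<lambda>x. prod (A x - A0) (B x - B0))"
    using cross by (rule bigo_at_mono) simp
  then have "bigo_at x0 1 (\<lambda>x. prod (A x) (B x) - prod A0 B0)"
    unfolding first by (intro bigo_at_add left right A1 B1)
  moreover have
    "bigo_at x0 2 (\<lambda>x. prod (A x) (B x) - prod A0 B0 - (prod (dA x) B0 + prod A0 (dB x)))"
    unfolding second by (intro bigo_at_add left right A2 B2 cross)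
  ultimately show ?thesis unfolding first_order_expansion_def ..
qed

lemma first_order_expansion_matrix_sandwich:
  fixes F :: "'a::real_normed_vector \<Rightarrow> real^'n^'m" and W :: "real^'m^'k" and V :: "real^'p^'n"
  assumes "first_order_expansion x0 F F0 dF"
  shows "first_order_expansion x0 (\<lambda>x. W ** F x ** V) (W ** F0 ** V) (\<lambda>x. W ** dF x ** V)"
  using matrix_mult.first_order_expansion[OF
      matrix_mult.first_order_expansion[OF first_order_expansion_const assms] first_order_expansion_const]
  by simp

lemma matrix_sandwich_bigo_at:
  fixes L :: "'a::real_normed_vector \<Rightarrow> real^'m^'k" and F :: "'a \<Rightarrow> real^'n^'m"
    and R :: "'a \<Rightarrow> real^'p^'n"
  assumes "bigo_at x0 i L" "bigo_at x0 j F" "bigo_at x0 k R" "i + j + k = n"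
  shows "bigo_at x0 n (\<lambda>x. L x ** F x ** R x)"
  by (rule matrix_mult.bigo_at[OF matrix_mult.bigo_at[OF assms(1,2) refl] assms(3,4)])

lemma matrix_inv_bigo_at_bounded:
  fixes K Ki :: "'a::real_normed_vector \<Rightarrow> real^'n^'n"
  assumes resolvent: "\<And>x. K0i - Ki x = K0i ** (K x - K0) ** Ki x"
    and K1: "bigo_at x0 1 (\<lambda>x. K x - K0)"
  shows "bigo_at x0 0 Ki"
proof -
  define e where "e = 1 / (2 * (norm K0i + 1))"
  have "e > 0" by (simp add: e_def add_nonneg_pos)
  have "norm K0i * e = norm K0i / (2 * (norm K0i + 1))" by (simp add: e_def)
  also have "\<dots> \<le> 1/2" by (subst pos_divide_le_eq) (simp_all add: add_nonneg_pos)
  finally have small: "norm K0i * e \<le> 1/2" .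
  have "\<forall>\<^sub>F x in nhds x0. norm (Ki x) \<le> 2 * norm K0i"
    using bigo_at_imp_eventually_small[OF K1 zero_less_one \<open>e > 0\<close>]
  proof (rule eventually_mono)
    fix x assume near: "norm (K x - K0) \<le> e"
    have "norm (K0i ** (K x - K0) ** Ki x) \<le> norm K0i * norm (K x - K0) * norm (Ki x)"
      by (meson norm_matrix_mult_le order_trans mult_right_mono norm_ge_zero)
    also have "\<dots> \<le> 1/2 * norm (Ki x)"
    proof (rule mult_right_mono)
      have "norm K0i * norm (K x - K0) \<le> norm K0i * e" using near by (rule mult_left_mono) simp
      then show "norm K0i * norm (K x - K0) \<le> 1/2" using small by linarith
    qed simp
    finally have "norm (K0i ** (K x - K0) ** Ki x) \<le> 1/2 * norm (Ki x)" .
    moreover have "norm (Ki x) \<le> norm K0i + norm (K0i ** (K x - K0) ** Ki x)"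
      using norm_triangle_ineq4[of K0i "K0i - Ki x"] by (simp add: resolvent[symmetric])
    ultimately show "norm (Ki x) \<le> 2 * norm K0i" by linarith
  qed
  then show ?thesis by (intro bigo_atI) simp
qed

lemma matrix_inv_first_order_expansion:
  fixes K Ki :: "'a::real_normed_vector \<Rightarrow> real^'n^'n"
  assumes inv: "\<And>x. K x ** Ki x = mat 1" and inv0: "K0i ** K0 = mat 1"
    and K: "first_order_expansion x0 K K0 dK"
  shows "first_order_expansion x0 Ki K0i (\<lambda>x. - (K0i ** dK x ** K0i))"
proof -
  have K1: "bigo_at x0 1 (\<lambda>x. K x - K0)" and K2: "bigo_at x0 2 (\<lambda>x. K x - K0 - dK x)"
    using K unfolding first_order_expansion_def by blast+
  have resolvent: "K0i - Ki x = K0i ** (K x - K0) ** Ki x" for x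
    by (simp add: matrix_mult.diff_left matrix_mult.diff_right inv inv0 flip: matrix_mul_assoc)
  have Ki0: "bigo_at x0 0 Ki" by (rule matrix_inv_bigo_at_bounded[OF resolvent K1])
  have "bigo_at x0 1 (\<lambda>x. K0i - Ki x)"
    unfolding resolvent by (rule matrix_sandwich_bigo_at[OF bigo_at_const K1 Ki0]) simp
  from bigo_at_uminus[OF this] have Ki1: "bigo_at x0 1 (\<lambda>x. Ki x - K0i)" by simp
  have "bigo_at x0 2 (\<lambda>x. K0i ** (K x - K0 - dK x) ** K0i)"
    by (rule matrix_sandwich_bigo_at[OF bigo_at_const K2 bigo_at_const]) simp
  moreover have "bigo_at x0 2 (\<lambda>x. K0i ** (K x - K0) ** (Ki x - K0i))"
    by (rule matrix_sandwich_bigo_at[OF bigo_at_const K1 Ki1]) simp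
  ultimately have "bigo_at x0 2
      (\<lambda>x. - (K0i ** (K x - K0 - dK x) ** K0i) - K0i ** (K x - K0) ** (Ki x - K0i))"
    by (intro bigo_at_diff bigo_at_uminus)
  moreover have "- (K0i ** (K x - K0 - dK x) ** K0i) - K0i ** (K x - K0) ** (Ki x - K0i)
      = Ki x - K0i - - (K0i ** dK x ** K0i)" for x
  proof -
    have "- (K0i ** (K x - K0 - dK x) ** K0i) - K0i ** (K x - K0) ** (Ki x - K0i)
        = K0i ** dK x ** K0i - K0i ** (K x - K0) ** Ki x"
      by (simp add: matrix_mult.diff_left matrix_mult.diff_right)
    then show ?thesis by (simp add: resolvent[symmetric])
  qed
  ultimately show ?thesis unfolding first_order_expansion_def using Ki1 by simp
qed

lemma spd_congruence:
  fixes U :: "real^'m^'n"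
  assumes "spd A" and orth: "transpose U ** B ** U = mat 1"
  shows "spd (transpose U ** A ** U)"
  unfolding spd_def
proof (intro conjI allI impI)
  show "transpose (transpose U ** A ** U) = transpose U ** A ** U"
    using \<open>spd A\<close> by (simp add: spd_def matrix_transpose_mul matrix_mul_assoc)
  fix v :: "real^'m" assume "v \<noteq> 0"
  have "v = (transpose U ** B) *v (U *v v)"
    using orth by (simp add: matrix_vector_mul_assoc)
  then have "U *v v \<noteq> 0" using \<open>v \<noteq> 0\<close> by auto
  then have "inner (U *v v) (A *v (U *v v)) > 0" using \<open>spd A\<close> unfolding spd_def by blast
  moreover have "inner v ((transpose U ** A ** U) *v v) = inner (U *v v) (A *v (U *v v))"
    by (simp add: matrix_vector_mul_assoc[symmetric] inner_commute[of v] dot_lmul_matrix,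
        rule inner_commute)
  ultimately show "inner v ((transpose U ** A ** U) *v v) > 0" by simp
qed

lemma isqrt_bigo_at:
  fixes A B :: "'a::real_normed_vector \<Rightarrow> real^'n^'n"
  assumes symA: "\<And>x. transpose (A x) = A x" and symB: "\<And>x. transpose (B x) = B x"
    and B1: "bigo_at x0 1 (\<lambda>x. B x - mat 1)" and AB: "bigo_at x0 2 (\<lambda>x. A x - B x)"
  shows near: "\<forall>\<^sub>F x in nhds x0. norm (A x - mat 1) \<le> 1/4 \<and> norm (B x - mat 1) \<le> 1/4"
    and "bigo_at x0 0 (\<lambda>x. isqrt (A x))" "bigo_at x0 0 (\<lambda>x. isqrt (B x))"
    "bigo_at x0 2 (\<lambda>x. isqrt (A x) - isqrt (B x))"
proof -
  have "bigo_at x0 1 (\<lambda>x. A x - B x)" using AB by (rule bigo_at_mono) simp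
  then have "bigo_at x0 1 (\<lambda>x. (A x - B x) + (B x - mat 1))" using B1 by (rule bigo_at_add)
  then have "\<forall>\<^sub>F x in nhds x0. norm (A x - mat 1) \<le> 1/4"
    using bigo_at_imp_eventually_small[of x0 1 _ "1/4"] by simp
  moreover have "\<forall>\<^sub>F x in nhds x0. norm (B x - mat 1) \<le> 1/4"
    using B1 by (rule bigo_at_imp_eventually_small) simp_all
  ultimately show near: "\<forall>\<^sub>F x in nhds x0. norm (A x - mat 1) \<le> 1/4 \<and> norm (B x - mat 1) \<le> 1/4"
    by (rule eventually_conj)
  have "\<forall>\<^sub>F x in nhds x0. norm (isqrt (A x)) \<le> 2 * real CARD('n) * norm (x - x0) ^ 0"
    using near by (rule eventually_mono)
      (simp only: power_0 mult_1_right, blast intro: isqrt_near_identity(4) symA)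
  then show "bigo_at x0 0 (\<lambda>x. isqrt (A x))" by (rule bigo_atI)
  have "\<forall>\<^sub>F x in nhds x0. norm (isqrt (B x)) \<le> 2 * real CARD('n) * norm (x - x0) ^ 0"
    using near by (rule eventually_mono)
      (simp only: power_0 mult_1_right, blast intro: isqrt_near_identity(4) symB)
  then show "bigo_at x0 0 (\<lambda>x. isqrt (B x))" by (rule bigo_atI)
  have "\<forall>\<^sub>F x in nhds x0.
      norm (isqrt (A x) - isqrt (B x)) \<le> (2 * real CARD('n))\<^sup>2 * norm (A x - B x)"
    using near by (rule eventually_mono) (intro isqrt_lipschitz_near_identity symA symB; simp)
  then show "bigo_at x0 2 (\<lambda>x. isqrt (A x) - isqrt (B x))"
    by (rule bigo_at_dominated[OF AB])
qed

lemma congruence_error_bigo_at: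
  fixes S T :: "'a::real_normed_vector \<Rightarrow> real^'m^'m" and P Q :: "'a \<Rightarrow> real^'n^'n"
    and W :: "real^'n^'m" and V :: "real^'m^'n"
  assumes S: "bigo_at x0 0 S" and T: "bigo_at x0 0 T" and ST: "bigo_at x0 2 (\<lambda>x. S x - T x)"
    and PRQ: "bigo_at x0 2 (\<lambda>x. P x - R - Q x)"
  shows "bigo_at x0 2 (\<lambda>x. S x ** (W ** P x ** V) ** S x
                          - (T x ** (W ** R ** V) ** T x + S x ** (W ** Q x ** V) ** S x))"
proof -
  have "S x ** (W ** P x ** V) ** S x - (T x ** (W ** R ** V) ** T x + S x ** (W ** Q x ** V) ** S x)
      = S x ** (W ** (P x - R - Q x) ** V) ** S x
        + ((S x - T x) ** (W ** R ** V) ** S x + T x ** (W ** R ** V) ** (S x - T x))" for x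
    by (simp add: matrix_mult.diff_left matrix_mult.diff_right matrix_mult.add_left
        matrix_mult.add_right algebra_simps)
  moreover have "bigo_at x0 2 (\<lambda>x. W ** (P x - R - Q x) ** V)"
    by (rule matrix_sandwich_bigo_at[OF bigo_at_const PRQ bigo_at_const]) simp
  then have "bigo_at x0 2 (\<lambda>x. S x ** (W ** (P x - R - Q x) ** V) ** S x)"
    by (rule matrix_sandwich_bigo_at[OF S _ S]) simp
  moreover have "bigo_at x0 2 (\<lambda>x. (S x - T x) ** (W ** R ** V) ** S x)"
    by (rule matrix_sandwich_bigo_at[OF ST bigo_at_const S]) simp
  moreover have "bigo_at x0 2 (\<lambda>x. T x ** (W ** R ** V) ** (S x - T x))"
    by (rule matrix_sandwich_bigo_at[OF T bigo_at_const ST]) simp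
  ultimately show ?thesis by (simp add: bigo_at_add)
qed

lemma first_order_expansion_C2_sandwich:
  fixes M :: "real^'l \<Rightarrow> real^'n^'n" and W :: "real^'n^'m" and V :: "real^'k^'n"
  assumes "C2 M"
  shows "first_order_expansion x0 (\<lambda>x. W ** M x ** V) (W ** M x0 ** V)
           (\<lambda>x. \<Sum>j\<in>UNIV. (x $ j - x0 $ j) *\<^sub>R (W ** pderiv_at M j x0 ** V))"
proof -
  have expand: "W ** frechet_derivative M (at x0) (x - x0) ** V
      = (\<Sum>j\<in>UNIV. (x $ j - x0 $ j) *\<^sub>R (W ** pderiv_at M j x0 ** V))" for x
    by (simp add: frechet_derivative_pderiv_expansion C2_differentiable assms matrix_mult.sum_left
        matrix_mult.sum_right matrix_mult.scaleR_left matrix_mult.scaleR_right)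
  show ?thesis
    unfolding expand[symmetric]
    by (rule first_order_expansion_matrix_sandwich[OF C2_first_order_expansion[OF assms]])
qed

lemma first_order_expansion_mult_inv_mult:
  fixes K M :: "real^'l \<Rightarrow> real^'n^'n"
  assumes "\<And>x. invertible (K x)" "C2 K" "C2 M"
  shows "first_order_expansion x0 (\<lambda>x. M x ** matrix_inv (K x) ** M x)
           (M x0 ** matrix_inv (K x0) ** M x0)
           (\<lambda>x. \<Sum>j\<in>UNIV. (x $ j - x0 $ j) *\<^sub>R
              (pderiv_at M j x0 ** matrix_inv (K x0) ** M x0
               - M x0 ** matrix_inv (K x0) ** pderiv_at K j x0 ** matrix_inv (K x0) ** M x0
               + M x0 ** matrix_inv (K x0) ** pderiv_at M j x0))"
proof -
  let ?K0i = "matrix_inv (K x0)"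
  let ?dM = "\<lambda>x. frechet_derivative M (at x0) (x - x0)"
  let ?dK = "\<lambda>x. frechet_derivative K (at x0) (x - x0)"
  have "first_order_expansion x0 (\<lambda>x. matrix_inv (K x)) ?K0i (\<lambda>x. - (?K0i ** ?dK x ** ?K0i))"
    by (rule matrix_inv_first_order_expansion[OF matrix_inv_right[OF assms(1)]
          matrix_inv_left[OF assms(1)] C2_first_order_expansion[OF assms(2)]])
  with C2_first_order_expansion[OF assms(3)]
  have "first_order_expansion x0 (\<lambda>x. M x ** matrix_inv (K x) ** M x) (M x0 ** ?K0i ** M x0)
      (\<lambda>x. (?dM x ** ?K0i + M x0 ** - (?K0i ** ?dK x ** ?K0i)) ** M x0 + M x0 ** ?K0i ** ?dM x)"
    by (intro matrix_mult.first_order_expansion)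
  moreover have "(?dM x ** ?K0i + M x0 ** - (?K0i ** ?dK x ** ?K0i)) ** M x0 + M x0 ** ?K0i ** ?dM x
      = (\<Sum>j\<in>UNIV. (x $ j - x0 $ j) *\<^sub>R
          (pderiv_at M j x0 ** ?K0i ** M x0 - M x0 ** ?K0i ** pderiv_at K j x0 ** ?K0i ** M x0
           + M x0 ** ?K0i ** pderiv_at M j x0))" for x
    by (simp add: frechet_derivative_pderiv_expansion C2_differentiable assms scaleR_diff_right
        scaleR_add_right sum.distrib sum_subtractf matrix_mult.sum_left matrix_mult.sum_right
        matrix_mult.scaleR_left matrix_mult.scaleR_right matrix_mult.minus_right
        matrix_mult.add_left matrix_mult.minus_left matrix_mult.diff_left matrix_mul_assoc)
  ultimately show ?thesis by (simp only:)
qed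

theorem lemma3:
  fixes K M :: "real^'l \<Rightarrow> real^'n^'n"
    and x0 :: "real^'l"
    and U :: "real^'m^'n"
  assumes K_spd: "\<And>x. spd (K x)"
    and M_spd: "\<And>x. spd (M x)"
    and K_C2: "C2 K"
    and M_C2: "C2 M"
    and U_orth: "transpose U ** M x0 ** U = mat 1"
  defines "K0 \<equiv> K x0"
    and "M0 \<equiv> M x0"
  defines "Z \<equiv> (\<lambda>x. transpose U ** M x ** U)"
  defines "Um0 \<equiv> (\<lambda>x. U ** isqrt (Z x))"
  defines "F0 \<equiv> (\<lambda>x. transpose (Um0 x) ** M x ** matrix_inv (K x) ** M x ** Um0 x)"
  defines "Tm \<equiv> transpose U ** M0 ** matrix_inv K0 ** M0 ** U"
  defines "Zhat \<equiv> (\<lambda>x. mat 1 + (\<Sum>j\<in>UNIV. (x $ j - x0 $ j) *\<^sub>R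
                         (transpose U ** pderiv_at M j x0 ** U)))"
  defines "G \<equiv> (\<lambda>j. pderiv_at M j x0 ** matrix_inv K0 ** M0
                     - M0 ** matrix_inv K0 ** pderiv_at K j x0 ** matrix_inv K0 ** M0
                     + M0 ** matrix_inv K0 ** pderiv_at M j x0)"
  defines "Ghat \<equiv> (\<lambda>j x. isqrt (Z x) ** (transpose U ** G j ** U) ** isqrt (Z x))"
  defines "Fm0 \<equiv> (\<lambda>x. isqrt (Zhat x) ** Tm ** isqrt (Zhat x)
                     + (\<Sum>j\<in>UNIV. (x $ j - x0 $ j) *\<^sub>R Ghat j x))"
  shows "\<exists>N C. open N \<and> x0 \<in> N \<and> (\<forall>x\<in>N. spd (Z x) \<and> spd (Zhat x)) \<and>
           (\<forall>x\<in>N. norm (F0 x - Fm0 x) \<le> C * (norm (x - x0))\<^sup>2)"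
proof -
  let ?Ut = "transpose U"
  have M_sym: "\<And>x. transpose (M x) = M x" using M_spd unfolding spd_def by blast
  have Z_spd: "spd (Z x)" for x unfolding Z_def by (rule spd_congruence[OF M_spd U_orth])
  then have Z_sym: "transpose (Z x) = Z x" for x unfolding spd_def by blast
  have Zhat_sym: "transpose (Zhat x) = Zhat x" for x
    by (simp add: Zhat_def transpose_add transpose_sum transpose_scalar matrix_transpose_mul
        matrix_mul_assoc pderiv_at_transpose_sym[OF M_sym C2_differentiable[OF M_C2]])
  have Z_exp: "first_order_expansion x0 Z (mat 1) (\<lambda>x. Zhat x - mat 1)"
    using first_order_expansion_C2_sandwich[OF M_C2, of x0 ?Ut U] U_orth
    by (simp add: Z_def Zhat_def)
  then have "bigo_at x0 2 (\<lambda>x. Z x - Zhat x)" unfolding first_order_expansion_def by simp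
  note isqrt_Z =
    isqrt_bigo_at[OF Z_sym Zhat_sym first_order_expansion_bigo_at_derivative[OF Z_exp] this]
  have MKM: "bigo_at x0 2 (\<lambda>x. M x ** matrix_inv (K x) ** M x - M0 ** matrix_inv K0 ** M0
      - (\<Sum>j\<in>UNIV. (x $ j - x0 $ j) *\<^sub>R G j))"
    using first_order_expansion_mult_inv_mult[OF spd_invertible[OF K_spd] K_C2 M_C2, of x0]
    unfolding first_order_expansion_def G_def K0_def M0_def by blast
  have "bigo_at x0 2 (\<lambda>x. F0 x - Fm0 x)"
    using congruence_error_bigo_at[OF isqrt_Z(2-4) MKM, of ?Ut U]
    by (rule bigo_at_cong)
       (rule eventually_mono[OF isqrt_Z(1)], elim conjE, drule isqrt_near_identity(3)[OF Z_sym],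
        simp add: F0_def Um0_def Fm0_def Ghat_def Tm_def matrix_transpose_mul matrix_mul_assoc
          matrix_mult.sum_left matrix_mult.sum_right matrix_mult.scaleR_left matrix_mult.scaleR_right)
  moreover have "\<forall>\<^sub>F x in nhds x0. spd (Z x) \<and> spd (Zhat x)"
    using isqrt_Z(1) by (rule eventually_mono) (blast intro: Z_spd spd_near_identity Zhat_sym)
  ultimately show ?thesis by (rule bigo_at_nhds_bound)
qed

end
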